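(* Let $(\mathbf{X}^m,\kappa^m)\in\mathbb{X}^h\times\mathbb{K}^h$, $m\ge 0$, be a solution sequence of the PC-ZJB scheme (defined in the context) with $\min_{1\le j\le N}|\mathbf{h}^m_j|>0$ for all $m\ge0$, where $\mathbf{h}^m_j=\mathbf{X}^m(\rho_j)-\mathbf{X}^m(\rho_{j-1})$. Suppose that as $m\to\infty$, $\mathbf{X}^m$ and $\kappa^m$ converge to an equilibrium state $\Gamma^e=\mathbf{X}^e=(x^e,y^e)^T\in\mathbb{X}^h$ and $\kappa^e\in\mathbb{K}^h$, respectively, and that the predictors $\widetilde{\mathbf{X}}^{m+1/2}$ also converge to $\mathbf{X}^e$. Assume further that $\min_{1\le i\le N}|\mathbf{h}^e_i|>0$, where $\mathbf{h}^e_i=\mathbf{X}^e(\rho_i)-\mathbf{X}^e(\rho_{i-1})$. Then: (1) $\kappa^e(\rho)\equiv\kappa^c$ for all $\rho\in[0,1]$, where $\kappa^c\neq0$ is a constant; (2) $\lim_{m\to\infty}\Psi^m=\Psi^e:=\frac{\max_{1\le i\le N}|\mathbf{h}^e_i|}{\min_{1\le i\le N}|\mathbf{h}^e_i|}=1$, where $\Psi^m=\frac{\max_{1\le i\le N}|\mathbf{h}^m_i|}{\min_{1\le i\le N}|\mathbf{h}^m_i|}$; (3) if $\theta^l_e,\theta^r_e$ denote the left and right contact angles of $\Gamma^e$, then there exist constants $h_0>0$ and $C_0>0$ such that for all $0<h<h_0$, $|\cos\theta^l_e-\sigma|\le C_0h$ and $|\cos\theta^r_e-\sigma|\le C_0h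$.
   Context: Let $N\ge3$, $h=1/N$, $\rho_j=jh$, $I_j=[\rho_{j-1},\rho_j]$; $\mathbb{K}^h$ = continuous piecewise affine functions on $[0,1]$ w.r.t. this mesh, $\mathbb{K}^h_0=\{\psi\in\mathbb{K}^h:\psi(0)=\psi(1)=0\}$, $\mathbb{X}^h=\mathbb{K}^h\times\mathbb{K}^h_0$. For $\mathbf{Y}\in\mathbb{X}^h$ with edges $\mathbf{h}_j=\mathbf{Y}(\rho_j)-\mathbf{Y}(\rho_{j-1})\neq0$: normal on $I_j$ is $\big(-(\mathbf{h}_j)_2,(\mathbf{h}_j)_1\big)^T/|\mathbf{h}_j|$, $\partial_s f|_{I_j}=h\partial_\rho f|_{I_j}/|\mathbf{h}_j|$, $\langle u,v\rangle_{\mathbf{Y}}=\int_0^1u\cdot v|\partial_\rho\mathbf{Y}|d\rho$, $\langle u,v\rangle^h_{\mathbf{Y}}=\frac12\sum_j|\mathbf{h}_j|[(u\cdot v)(\rho_j^-)+(u\cdot v)(\rho_{j-1}^+)]$. Parameters $\tau>0,\eta>0,\sigma\in\mathbb{R}$ ($\sigma=\cos\theta_i$, $\theta_i\in(0,\pi)$ Young's angle). ZJB step of size $\delta$ from $\mathbf{X}^m$: find $(\mathbf{X}^{new},\kappa^{new})\in\mathbb{X}^h\times\mathbb{K}^h$ with $\langle(\mathbf{X}^{new}-\mathbf{X}^m)/\delta,\mathbf{n}^m\psi\rangle^h_{\mathbf{X}^m}+\langle\partial_s\kappa^{new},\partial_s\psi\rangle_{\mathbf{X}^m}=0$ $\forall\psi\in\mathbb{K}^h$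 and $\langle\kappa^{new}\mathbf{n}^m,\boldsymbol\omega\rangle^h_{\mathbf{X}^m}-\langle\partial_s\mathbf{X}^{new},\partial_s\boldsymbol\omega\rangle_{\mathbf{X}^m}-\frac1{\eta\delta}[(x^{new}(0)-x^m(0))\omega_1(0)+(x^{new}(1)-x^m(1))\omega_1(1)]+\sigma[\omega_1(1)-\omega_1(0)]=0$ $\forall\boldsymbol\omega\in\mathbb{X}^h$. PC-ZJB scheme: $\widetilde{\mathbf{X}}^{m+1/2}$ is one ZJB step of size $\tau/2$ from $\mathbf{X}^m$; with normal $\widetilde{\mathbf{n}}^{m+1/2}$, $\partial_s$ and inner products on $\widetilde\Gamma^{m+1/2}=\widetilde{\mathbf{X}}^{m+1/2}$, $(\mathbf{X}^{m+1},\kappa^{m+1})\in\mathbb{X}^h\times\mathbb{K}^h$ satisfy $\langle(\mathbf{X}^{m+1}-\mathbf{X}^m)/\tau,\widetilde{\mathbf{n}}^{m+1/2}\psi\rangle^h+\langle\partial_s\frac{\kappa^{m+1}+\kappa^m}{2},\partial_s\psi\rangle=0$ $\forall\psi\in\mathbb{K}^h$ and $\langle\frac{\kappa^{m+1}+\kappa^m}2\widetilde{\mathbf{n}}^{m+1/2},\boldsymbol\omega\rangle^h-\langle\partial_s\frac{\mathbf{X}^{m+1}+\mathbf{X}^m}2,\partial_s\boldsymbol\omega\rangle+\sigma[\omega_1(1)-\omega_1(0)]-\frac1{\eta\tau}[(x^{m+1}(0)-x^m(0))\omega_1(0)+(x^{m+1}(1)-x^m(1))\omega_1(1)]=0$ $\forall\boldsymbol\omega\in\mathbb{X}^h$;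 $\kappa^0$ is a given initial curvature. Contact angles of $\Gamma^e$: $\theta^l_e=\arccos(\partial_s x^e|_{I_1})$, $\theta^r_e=\arccos(\partial_s x^e|_{I_N})$. *)

theory Defs
  imports "HOL-Analysis.Analysis"
begin

text \<open>A continuous piecewise affine function is represented by its nodal values
  u 0, ..., u N (values at other indices are irrelevant).\<close>

type_synonym pt = "real \<times> real"

definition meshh :: "nat \<Rightarrow> real" where
  "meshh N = 1 / real N"

definition node :: "nat \<Rightarrow> nat \<Rightarrow> real" where
  "node N j = real j / real N"

definition interp :: "nat \<Rightarrow> (nat \<Rightarrow> real) \<Rightarrow> nat \<Rightarrow> real \<Rightarrow> real" where
  "interp N u j \<rho> = u (j - 1) + (\<rho> - node N (j - 1)) / meshh N * (u j - u (j - 1))"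

definition inXh :: "nat \<Rightarrow> (nat \<Rightarrow> pt) \<Rightarrow> bool" where
  "inXh N W \<longleftrightarrow> snd (W 0) = 0 \<and> snd (W N) = 0"

definition edge :: "(nat \<Rightarrow> pt) \<Rightarrow> nat \<Rightarrow> pt" where
  "edge Y j = Y j - Y (j - 1)"

definition elen :: "(nat \<Rightarrow> pt) \<Rightarrow> nat \<Rightarrow> real" where
  "elen Y j = norm (edge Y j)"

definition nrm :: "(nat \<Rightarrow> pt) \<Rightarrow> nat \<Rightarrow> pt" where
  "nrm Y j = (- snd (edge Y j) / elen Y j, fst (edge Y j) / elen Y j)"

definition ds :: "nat \<Rightarrow> (nat \<Rightarrow> pt) \<Rightarrow> (nat \<Rightarrow> 'a::real_vector) \<Rightarrow> nat \<Rightarrow> 'a" where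
  "ds N Y f j = (meshh N / elen Y j) *\<^sub>R ((1 / meshh N) *\<^sub>R (f j - f (j - 1)))"

definition drhoY :: "nat \<Rightarrow> (nat \<Rightarrow> pt) \<Rightarrow> nat \<Rightarrow> real" where
  "drhoY N Y j = elen Y j / meshh N"

text \<open>The L2 inner product on Y of d_s u and d_s v,
  int_0^1 d_s u . d_s v |d_rho Y| d rho; the integrand is constant on each I_j
  (of length h).\<close>
definition stiff :: "nat \<Rightarrow> (nat \<Rightarrow> pt) \<Rightarrow> (nat \<Rightarrow> 'a::real_inner) \<Rightarrow> (nat \<Rightarrow> 'a) \<Rightarrow> real" where
  "stiff N Y u v = (\<Sum>j = 1..N. inner (ds N Y u j) (ds N Y v j) * drhoY N Y j * meshh N)"

text \<open>The argument F j k is the value of (u . v) at node k taken as limit from inside I_j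
  (needed because the normal is only piecewise constant).\<close>
definition lumped :: "nat \<Rightarrow> (nat \<Rightarrow> pt) \<Rightarrow> (nat \<Rightarrow> nat \<Rightarrow> real) \<Rightarrow> real" where
  "lumped N Y F = (1/2) * (\<Sum>j = 1..N. elen Y j * (F j j + F j (j - 1)))"

definition zjb_step :: "nat \<Rightarrow> real \<Rightarrow> real \<Rightarrow> real \<Rightarrow> (nat \<Rightarrow> pt) \<Rightarrow> (nat \<Rightarrow> pt) \<Rightarrow> (nat \<Rightarrow> real) \<Rightarrow> bool" where
  "zjb_step N \<eta> \<sigma> \<delta> Xm Xn kn \<longleftrightarrow>
     inXh N Xn \<and>
     (\<forall>\<psi>::nat \<Rightarrow> real.
        lumped N Xm (\<lambda>j k. inner ((1 / \<delta>) *\<^sub>R (Xn k - Xm k)) (nrm Xm j) * \<psi> k)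
        + stiff N Xm kn \<psi> = 0) \<and>
     (\<forall>\<omega>::nat \<Rightarrow> pt. inXh N \<omega> \<longrightarrow>
        lumped N Xm (\<lambda>j k. kn k * inner (nrm Xm j) (\<omega> k))
        - stiff N Xm Xn \<omega>
        - 1 / (\<eta> * \<delta>) * ((fst (Xn 0) - fst (Xm 0)) * fst (\<omega> 0)
                          + (fst (Xn N) - fst (Xm N)) * fst (\<omega> N))
        + \<sigma> * (fst (\<omega> N) - fst (\<omega> 0)) = 0)"

definition pc_step :: "nat \<Rightarrow> real \<Rightarrow> real \<Rightarrow> real \<Rightarrow> (nat \<Rightarrow> pt) \<Rightarrow> (nat \<Rightarrow> real)
    \<Rightarrow> (nat \<Rightarrow> pt) \<Rightarrow> (nat \<Rightarrow> pt) \<Rightarrow> (nat \<Rightarrow> real) \<Rightarrow> bool" where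
  "pc_step N \<tau> \<eta> \<sigma> Xm km Xt Xn kn \<longleftrightarrow>
     inXh N Xn \<and>
     (\<forall>\<psi>::nat \<Rightarrow> real.
        lumped N Xt (\<lambda>j k. inner ((1 / \<tau>) *\<^sub>R (Xn k - Xm k)) (nrm Xt j) * \<psi> k)
        + stiff N Xt (\<lambda>k. (kn k + km k) / 2) \<psi> = 0) \<and>
     (\<forall>\<omega>::nat \<Rightarrow> pt. inXh N \<omega> \<longrightarrow>
        lumped N Xt (\<lambda>j k. (kn k + km k) / 2 * inner (nrm Xt j) (\<omega> k))
        - stiff N Xt (\<lambda>k. (1/2) *\<^sub>R (Xn k + Xm k)) \<omega>
        + \<sigma> * (fst (\<omega> N) - fst (\<omega> 0))
        - 1 / (\<eta> * \<tau>) * ((fst (Xn 0) - fst (Xm 0)) * fst (\<omega> 0)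
                          + (fst (Xn N) - fst (Xm N)) * fst (\<omega> N)) = 0)"

definition pc_zjb_solution :: "nat \<Rightarrow> real \<Rightarrow> real \<Rightarrow> real
    \<Rightarrow> (nat \<Rightarrow> nat \<Rightarrow> pt) \<Rightarrow> (nat \<Rightarrow> nat \<Rightarrow> real) \<Rightarrow> (nat \<Rightarrow> nat \<Rightarrow> pt) \<Rightarrow> bool" where
  "pc_zjb_solution N \<tau> \<eta> \<sigma> X \<kappa> Xt \<longleftrightarrow>
     (\<forall>m. inXh N (X m)
        \<and> (\<exists>kt. zjb_step N \<eta> \<sigma> (\<tau> / 2) (X m) (Xt m) kt)
        \<and> pc_step N \<tau> \<eta> \<sigma> (X m) (\<kappa> m) (Xt m) (X (Suc m)) (\<kappa> (Suc m)))"

definition mesh_ratio :: "nat \<Rightarrow> (nat \<Rightarrow> pt) \<Rightarrow> real" where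
  "mesh_ratio N Y = Max (elen Y ` {1..N}) / Min (elen Y ` {1..N})"

definition curve_length :: "nat \<Rightarrow> (nat \<Rightarrow> pt) \<Rightarrow> real" where
  "curve_length N Y = (\<Sum>j = 1..N. elen Y j)"

definition theta_l :: "nat \<Rightarrow> (nat \<Rightarrow> pt) \<Rightarrow> real" where
  "theta_l N Y = arccos (fst (ds N Y Y 1))"

definition theta_r :: "nat \<Rightarrow> (nat \<Rightarrow> pt) \<Rightarrow> real" where
  "theta_r N Y = arccos (fst (ds N Y Y N))"

end

theory Submission
  imports Defs
begin

(* Passing to the limit in the corrector equations (every term is continuous in the nodal
   values while the limit edges are non-degenerate, and the velocity and contact-line friction
   terms vanish because X^(m+1) - X^m tends to 0) shows that (X^e, kappa^e) is a discrete
   equilibrium. Testing its curvature equation with kappa^e itself gives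
   sum_j |kappa_j - kappa_(j-1)|^2 / |h_j| = 0, so kappa^e is a constant c.
   Testing the position equation with a vector placed at an interior node k gives the discrete
   Frenet relation T_(k+1) - T_k = (c/2) R (h_k + h_(k+1)) for the unit tangents
   T_j = d_s X|_(I_j) = h_j / |h_j| (ds N X X j below), R the rotation by -pi/2. Pairing it with
   T_(k+1) + T_k yields (|h_k| - |h_(k+1)|) (T_k x T_(k+1)) = 0, and parallel unit tangents would
   force c = 0; so all edges have equal length once c is nonzero. If c were 0 the curve would be
   a straight segment joining two points of the x-axis, hence horizontal, with tangent
   x-component sigma = cos theta_i, which is impossible for 0 < theta_i < pi.
   At the end nodes the same test gives cos theta - sigma = +-(c/2) (h_j)_2, which is at most
   |c| |h_j| / 2 = |c| L h / 2 in absolute value. *)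

lemma abs_cos_less_1:
  assumes "0 < \<theta>" "\<theta> < pi"
  shows "\<bar>cos \<theta>\<bar> < 1"
proof -
  have "cos \<theta> < cos 0" "cos pi < cos \<theta>"
    by (rule cos_monotone_0_pi; use assms in simp)+
  then show ?thesis
    by (simp add: abs_less_iff)
qed

lemma tendsto_Max_image:
  fixes f :: "'i \<Rightarrow> 'a \<Rightarrow> 'b::linorder_topology"
  assumes "finite A" "A \<noteq> {}" "\<forall>j\<in>A. ((\<lambda>m. f m j) \<longlongrightarrow> g j) F"
  shows "((\<lambda>m. Max (f m ` A)) \<longlongrightarrow> Max (g ` A)) F"
  using assms by (induction A rule: finite_ne_induct) (auto intro: tendsto_max)

lemma tendsto_Min_image:
  fixes f :: "'i \<Rightarrow> 'a \<Rightarrow> 'b::linorder_topology"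
  assumes "finite A" "A \<noteq> {}" "\<forall>j\<in>A. ((\<lambda>m. f m j) \<longlongrightarrow> g j) F"
  shows "((\<lambda>m. Min (f m ` A)) \<longlongrightarrow> Min (g ` A)) F"
  using assms by (induction A rule: finite_ne_induct) (auto intro: tendsto_min)

lemma limit_eq_if_eventually_eq:
  fixes f :: "'i \<Rightarrow> 'a::t2_space"
  assumes "F \<noteq> bot" "(f \<longlongrightarrow> L) F" "\<forall>\<^sub>F m in F. f m = c"
  shows "L = c"
  using tendsto_unique[OF assms(1,2) tendsto_eventually[OF assms(3)]] .

lemma sum_edges_delta:
  fixes G :: "nat \<Rightarrow> 'a::zero \<Rightarrow> 'a \<Rightarrow> 'b::comm_monoid_add"
  assumes "\<And>j. G j 0 0 = 0"
  shows "(\<Sum>j = 1..N. G j (if j = k then v else 0) (if j - 1 = k then v else 0))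
       = (if 0 < k \<and> k \<le> N then G k v 0 else 0) + (if k < N then G (Suc k) 0 v else 0)"
proof -
  have "(\<Sum>j = 1..N. G j (if j = k then v else 0) (if j - 1 = k then v else 0))
      = (\<Sum>j = 1..N. (if j = k then G k v 0 else 0) + (if j = Suc k then G (Suc k) 0 v else 0))"
    using assms by (intro sum.cong) auto
  then show ?thesis
    by (simp add: sum.distrib)
qed

lemma unit_turn_weights_eq:
  fixes t1 t2 q1 q2 d l m :: real
  assumes t: "t1\<^sup>2 + t2\<^sup>2 = 1" and q: "q1\<^sup>2 + q2\<^sup>2 = 1"
    and turn1: "q1 - t1 = d * (l * t2 + m * q2)" and turn2: "q2 - t2 = - (d * (l * t1 + m * q1))"
    and "l > 0" "m > 0" "d \<noteq> 0"
  shows "l = m"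
proof (rule ccontr)
  assume "l \<noteq> m"
  have "d * (l - m) * (t2 * q1 - t1 * q2) = (q1 - t1) * (q1 + t1) + (q2 - t2) * (q2 + t2)"
    unfolding turn1 turn2 by (simp add: algebra_simps)
  also have "\<dots> = 0"
    using t q by (simp add: algebra_simps power2_eq_square)
  finally have cross: "t2 * q1 - t1 * q2 = 0"
    using \<open>l \<noteq> m\<close> \<open>d \<noteq> 0\<close> by simp
  have "q1 * t1 + q2 * t2 - 1 = (q1 - t1) * t1 + (q2 - t2) * t2"
    using t by (simp add: algebra_simps power2_eq_square)
  also have "\<dots> = - d * m * (t2 * q1 - t1 * q2)"
    unfolding turn1 turn2 by (simp add: algebra_simps)
  also have "\<dots> = 0"
    using cross by simp
  finally have "(q1 - t1)\<^sup>2 + (q2 - t2)\<^sup>2 = 0"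
    using t q by (simp add: algebra_simps power2_eq_square)
  then have "q1 = t1" "q2 = t2"
    by (simp_all add: sum_power2_eq_zero_iff)
  then have "d * (l + m) * t2 = 0" "d * (l + m) * t1 = 0"
    using turn1 turn2 by (simp_all add: algebra_simps)
  then show False
    using t \<open>l > 0\<close> \<open>m > 0\<close> \<open>d \<noteq> 0\<close> by simp
qed

section \<open>Polygonal curves\<close>

lemma ds_eq:
  assumes "N > 0"
  shows "ds N Y f j = (1 / elen Y j) *\<^sub>R (f j - f (j - 1))"
  using assms by (simp add: ds_def meshh_def)

lemma edge_scaleR_ds:
  assumes "N > 0" "elen Y j \<noteq> 0"
  shows "edge Y j = elen Y j *\<^sub>R ds N Y Y j"
  using assms by (simp add: ds_eq edge_def)

lemma norm_ds_self:
  assumes "N > 0" "elen Y j \<noteq> 0"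
  shows "norm (ds N Y Y j) = 1"
  using assms by (simp add: ds_eq elen_def edge_def)

lemma ds_self_components:
  assumes "N > 0" "elen Y j \<noteq> 0"
  shows "(fst (ds N Y Y j))\<^sup>2 + (snd (ds N Y Y j))\<^sup>2 = 1"
  using norm_ds_self[OF assms] by (simp add: norm_prod_def)

lemma cos_arccos_fst_ds:
  assumes "N > 0" "elen Y j \<noteq> 0"
  shows "cos (arccos (fst (ds N Y Y j))) = fst (ds N Y Y j)"
proof -
  have "(fst (ds N Y Y j))\<^sup>2 \<le> 1"
    using ds_self_components[OF assms] zero_le_power2[of "snd (ds N Y Y j)"] by linarith
  then show ?thesis
    by (intro cos_arccos_abs) (simp add: abs_square_le_1)
qed

(* No nondegeneracy hypothesis: on a degenerate edge both sides vanish, as x / 0 = 0. *)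
lemma stiff_eq_sum:
  "stiff N Y u v = (\<Sum>j = 1..N. inner (u j - u (j - 1)) (v j - v (j - 1)) / elen Y j)"
proof (cases "N = 0")
  case False
  then have "N > 0" by simp
  then show ?thesis
    unfolding stiff_def drhoY_def ds_eq[OF \<open>N > 0\<close>]
    by (intro sum.cong) (auto simp: meshh_def power2_eq_square)
qed (simp add: stiff_def)

lemma const_if_stiff_self_eq_0:
  fixes u :: "nat \<Rightarrow> 'a::real_inner"
  assumes edges: "\<forall>j\<in>{1..N}. elen Y j > 0" and stiff: "stiff N Y u u = 0" and "j \<le> N"
  shows "u j = u 0"
proof -
  have "\<forall>j\<in>{1..N}. inner (u j - u (j - 1)) (u j - u (j - 1)) / elen Y j = 0"
    using stiff edges unfolding stiff_eq_sum
    by (subst (asm) sum_nonneg_eq_0_iff) (auto intro!: divide_nonneg_pos)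
  then have step: "u j = u (j - 1)" if "j \<in> {1..N}" for j
    using that edges by force
  show ?thesis
    using \<open>j \<le> N\<close>
  proof (induction j)
    case (Suc j)
    then show ?case using step[of "Suc j"] by simp
  qed simp
qed

lemma position_form_delta:
  fixes Y :: "nat \<Rightarrow> pt" and \<kappa> :: "nat \<Rightarrow> real" and k :: nat and v :: pt
  assumes "N > 0"
  defines "\<delta> \<equiv> \<lambda>i. if i = k then v else 0"
  shows "lumped N Y (\<lambda>j i. \<kappa> i * inner (nrm Y j) (\<delta> i)) - stiff N Y Y \<delta>
       = (if 0 < k \<and> k \<le> N then inner ((\<kappa> k / 2 * elen Y k) *\<^sub>R nrm Y k - ds N Y Y k) v else 0)
       + (if k < N then inner ((\<kappa> k / 2 * elen Y (Suc k)) *\<^sub>R nrm Y (Suc k) + ds N Y Y (Suc k)) v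
          else 0)"
proof -
  have lumped: "lumped N Y (\<lambda>j i. \<kappa> i * inner (nrm Y j) (\<delta> i))
      = 1/2 * ((if 0 < k \<and> k \<le> N then elen Y k * (\<kappa> k * inner (nrm Y k) v) else 0)
             + (if k < N then elen Y (Suc k) * (\<kappa> k * inner (nrm Y (Suc k)) v) else 0))"
    unfolding lumped_def \<delta>_def
    by (subst sum_edges_delta[where G = "\<lambda>j x y. elen Y j * (\<kappa> j * inner (nrm Y j) x
        + \<kappa> (j - 1) * inner (nrm Y j) y)"]) simp_all
  have stiff: "stiff N Y Y \<delta>
      = (if 0 < k \<and> k \<le> N then inner (ds N Y Y k) v else 0)
      - (if k < N then inner (ds N Y Y (Suc k)) v else 0)"
    unfolding stiff_eq_sum \<delta>_def
    by (subst sum_edges_delta[where G = "\<lambda>j x y. inner (Y j - Y (j - 1)) (x - y) / elen Y j"])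
       (simp_all add: ds_eq[OF \<open>N > 0\<close>])
  show ?thesis
    unfolding lumped stiff by (auto simp: inner_diff_left inner_add_left)
qed

lemma curve_length_pos:
  assumes "N > 0" "\<forall>j\<in>{1..N}. elen Y j > 0"
  shows "curve_length N Y > 0"
  unfolding curve_length_def using assms by (intro sum_pos) auto

lemma interp_const:
  assumes "\<And>k. k \<le> N \<Longrightarrow> u k = c" "j \<in> {1..N}"
  shows "interp N u j \<rho> = c"
proof -
  have "u j = c" "u (j - 1) = c"
    using assms by auto
  then show ?thesis
    by (simp add: interp_def)
qed

lemma mesh_ratio_eq_1:
  assumes "N > 0" "elen Y 1 > 0" "\<forall>j\<in>{1..N}. elen Y j = elen Y 1"
  shows "mesh_ratio N Y = 1"
proof -
  have "elen Y ` {1..N} = (\<lambda>_. elen Y 1) ` {1..N}"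
    using assms(3) by (intro image_cong) blast+
  also have "\<dots> = {elen Y 1}"
    using assms(1) by (simp add: image_constant_conv)
  finally show ?thesis
    using assms(2) by (simp add: mesh_ratio_def)
qed

section \<open>Continuity in the nodal values\<close>

lemma tendsto_edge:
  assumes "\<forall>k\<le>N. ((\<lambda>m. Y m k) \<longlongrightarrow> Ye k) F" "j \<le> N"
  shows "((\<lambda>m. edge (Y m) j) \<longlongrightarrow> edge Ye j) F"
  unfolding edge_def using assms by (intro tendsto_diff) auto

lemma tendsto_elen:
  assumes "\<forall>k\<le>N. ((\<lambda>m. Y m k) \<longlongrightarrow> Ye k) F" "j \<le> N"
  shows "((\<lambda>m. elen (Y m) j) \<longlongrightarrow> elen Ye j) F"
  unfolding elen_def by (intro tendsto_norm tendsto_edge[OF assms])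

lemma tendsto_nrm:
  assumes "\<forall>k\<le>N. ((\<lambda>m. Y m k) \<longlongrightarrow> Ye k) F" "j \<le> N" "elen Ye j \<noteq> 0"
  shows "((\<lambda>m. nrm (Y m) j) \<longlongrightarrow> nrm Ye j) F"
  unfolding nrm_def using assms(3)
  by (intro tendsto_intros tendsto_edge[OF assms(1,2)] tendsto_elen[OF assms(1,2)])

lemma tendsto_stiff:
  fixes u v :: "'i \<Rightarrow> nat \<Rightarrow> 'a::real_inner"
  assumes Y: "\<forall>k\<le>N. ((\<lambda>m. Y m k) \<longlongrightarrow> Ye k) F"
    and u: "\<forall>k\<le>N. ((\<lambda>m. u m k) \<longlongrightarrow> ue k) F"
    and v: "\<forall>k\<le>N. ((\<lambda>m. v m k) \<longlongrightarrow> ve k) F"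
    and edges: "\<forall>j\<in>{1..N}. elen Ye j \<noteq> 0"
  shows "((\<lambda>m. stiff N (Y m) (u m) (v m)) \<longlongrightarrow> stiff N Ye ue ve) F"
  unfolding stiff_eq_sum
proof (intro tendsto_sum)
  fix j assume "j \<in> {1..N}"
  then have "j \<le> N" "j - 1 \<le> N" "elen Ye j \<noteq> 0" using edges by auto
  then show "((\<lambda>m. inner (u m j - u m (j - 1)) (v m j - v m (j - 1)) / elen (Y m) j)
      \<longlongrightarrow> inner (ue j - ue (j - 1)) (ve j - ve (j - 1)) / elen Ye j) F"
    using u v by (intro tendsto_intros tendsto_elen[OF Y]) auto
qed

lemma tendsto_lumped:
  assumes Y: "\<forall>k\<le>N. ((\<lambda>m. Y m k) \<longlongrightarrow> Ye k) F"
    and G: "\<forall>j\<in>{1..N}. ((\<lambda>m. G m j j) \<longlongrightarrow> Ge j j) F \<and> ((\<lambda>m. G m j (j - 1)) \<longlongrightarrow> Ge j (j - 1)) F"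
  shows "((\<lambda>m. lumped N (Y m) (G m)) \<longlongrightarrow> lumped N Ye Ge) F"
  unfolding lumped_def using G
  by (intro tendsto_intros tendsto_elen[OF Y]) auto

lemma tendsto_mesh_ratio:
  assumes "N > 0" and Y: "\<forall>k\<le>N. ((\<lambda>m. Y m k) \<longlongrightarrow> Ye k) F"
    and edges: "\<forall>j\<in>{1..N}. elen Ye j > 0"
  shows "((\<lambda>m. mesh_ratio N (Y m)) \<longlongrightarrow> mesh_ratio N Ye) F"
  unfolding mesh_ratio_def
proof (intro tendsto_divide tendsto_Max_image tendsto_Min_image)
  have "Min (elen Ye ` {1..N}) > 0"
    using edges \<open>N > 0\<close> by (subst Min_gr_iff) auto
  then show "Min (elen Ye ` {1..N}) \<noteq> 0"
    by simp
qed (use \<open>N > 0\<close> Y in \<open>auto intro: tendsto_elen\<close>)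

section \<open>Discrete equilibria\<close>

(* The ZJB equations at rest: no velocity and no contact-line friction term. *)
definition equilibrium :: "nat \<Rightarrow> real \<Rightarrow> (nat \<Rightarrow> pt) \<Rightarrow> (nat \<Rightarrow> real) \<Rightarrow> bool" where
  "equilibrium N \<sigma> Y \<kappa> \<longleftrightarrow>
     (\<forall>\<psi>::nat \<Rightarrow> real. stiff N Y \<kappa> \<psi> = 0) \<and>
     (\<forall>\<omega>::nat \<Rightarrow> pt. inXh N \<omega> \<longrightarrow>
        lumped N Y (\<lambda>j k. \<kappa> k * inner (nrm Y j) (\<omega> k)) - stiff N Y Y \<omega>
        + \<sigma> * (fst (\<omega> N) - fst (\<omega> 0)) = 0)"

context
  fixes N :: nat and \<tau> \<eta> \<sigma> :: real and Xe :: "nat \<Rightarrow> pt" and \<kappa>e :: "nat \<Rightarrow> real"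
    and F :: "'i filter" and Xm Xn Xt :: "'i \<Rightarrow> nat \<Rightarrow> pt" and km kn :: "'i \<Rightarrow> nat \<Rightarrow> real"
  assumes F: "F \<noteq> bot"
    and steps: "\<forall>\<^sub>F m in F. pc_step N \<tau> \<eta> \<sigma> (Xm m) (km m) (Xt m) (Xn m) (kn m)"
    and Xm: "\<forall>k\<le>N. ((\<lambda>m. Xm m k) \<longlongrightarrow> Xe k) F"
    and Xn: "\<forall>k\<le>N. ((\<lambda>m. Xn m k) \<longlongrightarrow> Xe k) F"
    and Xt: "\<forall>k\<le>N. ((\<lambda>m. Xt m k) \<longlongrightarrow> Xe k) F"
    and km: "\<forall>k\<le>N. ((\<lambda>m. km m k) \<longlongrightarrow> \<kappa>e k) F"
    and kn: "\<forall>k\<le>N. ((\<lambda>m. kn m k) \<longlongrightarrow> \<kappa>e k) F"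
    and edges: "\<forall>j\<in>{1..N}. elen Xe j \<noteq> 0"
begin

lemma pc_step_displacement_tendsto_0:
  "k \<le> N \<Longrightarrow> ((\<lambda>m. Xn m k - Xm m k) \<longlongrightarrow> 0) F"
  using tendsto_diff[of "\<lambda>m. Xn m k" _ _ "\<lambda>m. Xm m k"] Xn Xm by fastforce

lemma pc_step_mean_curvature_tendsto: "\<forall>k\<le>N. ((\<lambda>m. (kn m k + km m k) / 2) \<longlongrightarrow> \<kappa>e k) F"
proof (intro allI impI)
  fix k assume "k \<le> N"
  then have "((\<lambda>m. (kn m k + km m k) / 2) \<longlongrightarrow> (\<kappa>e k + \<kappa>e k) / 2) F"
    using kn km by (intro tendsto_intros) auto
  then show "((\<lambda>m. (kn m k + km m k) / 2) \<longlongrightarrow> \<kappa>e k) F"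
    by simp
qed

lemma pc_step_limit_curvature_equation: "stiff N Xe \<kappa>e \<psi> = 0"
proof -
  let ?G = "\<lambda>m j k. inner ((1 / \<tau>) *\<^sub>R (Xn m k - Xm m k)) (nrm (Xt m) j) * \<psi> k"
  have "((\<lambda>m. ?G m j k) \<longlongrightarrow> 0) F" if "j \<in> {1..N}" "k \<le> N" for j k
  proof -
    have normal: "((\<lambda>m. nrm (Xt m) j) \<longlongrightarrow> nrm Xe j) F"
      using that edges by (intro tendsto_nrm[OF Xt]) auto
    show ?thesis
      using tendsto_mult[OF tendsto_inner[OF tendsto_scaleR[OF tendsto_const[of "1 / \<tau>"]
          pc_step_displacement_tendsto_0[OF that(2)]] normal] tendsto_const[of "\<psi> k"]]
      by simp
  qed
  then have "((\<lambda>m. lumped N (Xt m) (?G m)) \<longlongrightarrow> lumped N Xe (\<lambda>j k. 0)) F"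
    by (intro tendsto_lumped[OF Xt]) auto
  moreover have "((\<lambda>m. stiff N (Xt m) (\<lambda>k. (kn m k + km m k) / 2) \<psi>) \<longlongrightarrow> stiff N Xe \<kappa>e \<psi>) F"
    using edges by (intro tendsto_stiff[OF Xt pc_step_mean_curvature_tendsto]) auto
  moreover have "\<forall>\<^sub>F m in F.
      lumped N (Xt m) (?G m) + stiff N (Xt m) (\<lambda>k. (kn m k + km m k) / 2) \<psi> = 0"
    using steps by eventually_elim (simp add: pc_step_def)
  ultimately show ?thesis
    using limit_eq_if_eventually_eq[OF F tendsto_add] by (fastforce simp: lumped_def)
qed

lemma pc_step_limit_position_equation:
  assumes "inXh N \<omega>"
  shows "lumped N Xe (\<lambda>j k. \<kappa>e k * inner (nrm Xe j) (\<omega> k)) - stiff N Xe Xe \<omega>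
      + \<sigma> * (fst (\<omega> N) - fst (\<omega> 0)) = 0"
proof -
  let ?G = "\<lambda>m j k. (kn m k + km m k) / 2 * inner (nrm (Xt m) j) (\<omega> k)"
  let ?friction = "\<lambda>m. 1 / (\<eta> * \<tau>) * ((fst (Xn m 0) - fst (Xm m 0)) * fst (\<omega> 0)
                          + (fst (Xn m N) - fst (Xm m N)) * fst (\<omega> N))"
  have "((\<lambda>m. ?G m j k) \<longlongrightarrow> \<kappa>e k * inner (nrm Xe j) (\<omega> k)) F" if "j \<in> {1..N}" "k \<le> N" for j k
    using pc_step_mean_curvature_tendsto that edges
    by (intro tendsto_mult tendsto_inner tendsto_nrm[OF Xt] tendsto_const) auto
  then have "((\<lambda>m. lumped N (Xt m) (?G m))
      \<longlongrightarrow> lumped N Xe (\<lambda>j k. \<kappa>e k * inner (nrm Xe j) (\<omega> k))) F"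
    by (intro tendsto_lumped[OF Xt]) auto
  moreover have "\<forall>k\<le>N. ((\<lambda>m. (1/2) *\<^sub>R (Xn m k + Xm m k)) \<longlongrightarrow> Xe k) F"
  proof (intro allI impI)
    fix k assume "k \<le> N"
    then have "((\<lambda>m. (1/2) *\<^sub>R (Xn m k + Xm m k)) \<longlongrightarrow> (1/2) *\<^sub>R (Xe k + Xe k)) F"
      using Xn Xm by (intro tendsto_intros) auto
    then show "((\<lambda>m. (1/2) *\<^sub>R (Xn m k + Xm m k)) \<longlongrightarrow> Xe k) F"
      by (simp add: scaleR_2[symmetric])
  qed
  then have "((\<lambda>m. stiff N (Xt m) (\<lambda>k. (1/2) *\<^sub>R (Xn m k + Xm m k)) \<omega>) \<longlongrightarrow> stiff N Xe Xe \<omega>) F"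
    using edges by (intro tendsto_stiff[OF Xt]) auto
  moreover have "(?friction \<longlongrightarrow> 0) F"
    using tendsto_mult[OF tendsto_const[of "1 / (\<eta> * \<tau>)"] tendsto_add[OF
        tendsto_mult[OF tendsto_fst[OF pc_step_displacement_tendsto_0[of 0]]
          tendsto_const[of "fst (\<omega> 0)"]]
        tendsto_mult[OF tendsto_fst[OF pc_step_displacement_tendsto_0[of N]]
          tendsto_const[of "fst (\<omega> N)"]]]]
    by simp
  moreover have "\<forall>\<^sub>F m in F. lumped N (Xt m) (?G m)
      - stiff N (Xt m) (\<lambda>k. (1/2) *\<^sub>R (Xn m k + Xm m k)) \<omega>
      + \<sigma> * (fst (\<omega> N) - fst (\<omega> 0)) - ?friction m = 0"
    using steps by eventually_elim (use assms in \<open>simp add: pc_step_def\<close>)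
  ultimately show ?thesis
    using limit_eq_if_eventually_eq[OF F
        tendsto_diff[OF tendsto_add[OF tendsto_diff tendsto_const]]]
    by fastforce
qed

lemma pc_step_limit_equilibrium: "equilibrium N \<sigma> Xe \<kappa>e"
  unfolding equilibrium_def
  using pc_step_limit_curvature_equation pc_step_limit_position_equation by blast

end

lemma pc_zjb_solution_limit_equilibrium:
  assumes sol: "pc_zjb_solution N \<tau> \<eta> \<sigma> X \<kappa> Xt"
    and X: "\<forall>k\<le>N. (\<lambda>m. X m k) \<longlonglongrightarrow> Xe k"
    and \<kappa>: "\<forall>k\<le>N. (\<lambda>m. \<kappa> m k) \<longlonglongrightarrow> \<kappa>e k"
    and Xt: "\<forall>k\<le>N. (\<lambda>m. Xt m k) \<longlonglongrightarrow> Xe k"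
    and edges: "\<forall>j\<in>{1..N}. elen Xe j \<noteq> 0"
  shows "equilibrium N \<sigma> Xe \<kappa>e"
proof (rule pc_step_limit_equilibrium[OF trivial_limit_sequentially _ X _ Xt \<kappa> _ edges])
  show "\<forall>\<^sub>F m in sequentially. pc_step N \<tau> \<eta> \<sigma> (X m) (\<kappa> m) (Xt m) (X (Suc m)) (\<kappa> (Suc m))"
    using sol by (simp add: pc_zjb_solution_def)
next
  show "\<forall>k\<le>N. (\<lambda>m. X (Suc m) k) \<longlonglongrightarrow> Xe k"
    using X LIMSEQ_Suc[of "\<lambda>m. X m k" for k] by simp
  show "\<forall>k\<le>N. (\<lambda>m. \<kappa> (Suc m) k) \<longlonglongrightarrow> \<kappa>e k"
    using \<kappa> LIMSEQ_Suc[of "\<lambda>m. \<kappa> m k" for k] by simp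
qed

lemma equilibrium_curvature_const:
  assumes "equilibrium N \<sigma> Y \<kappa>" "\<forall>j\<in>{1..N}. elen Y j > 0" "j \<le> N"
  shows "\<kappa> j = \<kappa> 0"
  using assms by (intro const_if_stiff_self_eq_0[where Y = Y]) (auto simp: equilibrium_def)

lemma equilibrium_node_equations:
  fixes Y :: "nat \<Rightarrow> pt"
  assumes eq: "equilibrium N \<sigma> Y \<kappa>" and N: "N > 0" and edges: "\<forall>j\<in>{1..N}. elen Y j \<noteq> 0"
  shows "\<And>k. 0 < k \<Longrightarrow> k < N \<Longrightarrow> ds N Y Y (Suc k) - ds N Y Y k
           = (\<kappa> k / 2) *\<^sub>R (snd (edge Y k + edge Y (Suc k)), - fst (edge Y k + edge Y (Suc k)))"
    and "fst (ds N Y Y 1) - \<sigma> = \<kappa> 0 / 2 * snd (edge Y 1)"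
    and "fst (ds N Y Y N) - \<sigma> = - (\<kappa> N / 2 * snd (edge Y N))"
proof -
  have test: "lumped N Y (\<lambda>j i. \<kappa> i * inner (nrm Y j) (\<delta> i)) - stiff N Y Y \<delta>
      + \<sigma> * (fst (\<delta> N) - fst (\<delta> 0)) = 0" if "inXh N \<delta>" for \<delta>
    using eq that unfolding equilibrium_def by blast
  have normal: "elen Y j * fst (nrm Y j) = - snd (edge Y j)"
      "elen Y j * snd (nrm Y j) = fst (edge Y j)" if "j \<in> {1..N}" for j
    using edges that by (auto simp: nrm_def)
  show "ds N Y Y (Suc k) - ds N Y Y k
      = (\<kappa> k / 2) *\<^sub>R (snd (edge Y k + edge Y (Suc k)), - fst (edge Y k + edge Y (Suc k)))"
    if k: "0 < k" "k < N" for k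
  proof -
    let ?R = "((\<kappa> k / 2 * elen Y k) *\<^sub>R nrm Y k - ds N Y Y k)
      + ((\<kappa> k / 2 * elen Y (Suc k)) *\<^sub>R nrm Y (Suc k) + ds N Y Y (Suc k))"
    have "inner ?R v = 0" for v
      using test[of "\<lambda>i. if i = k then v else 0"] position_form_delta[OF N, of Y \<kappa> k v] k
      by (simp add: inXh_def inner_add_left)
    then have "?R = 0"
      using inner_eq_zero_iff by blast
    moreover have "k \<in> {1..N}" "Suc k \<in> {1..N}"
      using k by auto
    ultimately show ?thesis
      by (simp add: prod_eq_iff algebra_simps normal)
  qed
  have "1 \<in> {1..N}" "N \<in> {1..N}"
    using N by auto
  then show "fst (ds N Y Y 1) - \<sigma> = \<kappa> 0 / 2 * snd (edge Y 1)"
    and "fst (ds N Y Y N) - \<sigma> = - (\<kappa> N / 2 * snd (edge Y N))"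
    using test[of "\<lambda>i. if i = 0 then (1, 0) else 0"] position_form_delta[OF N, of Y \<kappa> 0 "(1, 0)"]
      test[of "\<lambda>i. if i = N then (1, 0) else 0"] position_form_delta[OF N, of Y \<kappa> N "(1, 0)"] N
    by (simp_all add: inXh_def inner_Pair_0 algebra_simps normal)
qed

lemma equilibrium_edges_eq:
  fixes Y :: "nat \<Rightarrow> pt"
  assumes eq: "equilibrium N \<sigma> Y \<kappa>" and edges: "\<forall>j\<in>{1..N}. elen Y j > 0"
    and "\<kappa> 0 \<noteq> 0" and "j \<in> {1..N}"
  shows "elen Y j = elen Y 1"
proof -
  have N: "N > 0" and nz: "\<forall>j\<in>{1..N}. elen Y j \<noteq> 0"
    using \<open>j \<in> {1..N}\<close> edges by auto
  have step: "elen Y k = elen Y (Suc k)" if k: "0 < k" "k < N" for k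
  proof -
    let ?t = "ds N Y Y k" and ?q = "ds N Y Y (Suc k)"
    have "k \<in> {1..N}" "Suc k \<in> {1..N}"
      using k by auto
    then have unit: "(fst ?t)\<^sup>2 + (snd ?t)\<^sup>2 = 1" "(fst ?q)\<^sup>2 + (snd ?q)\<^sup>2 = 1"
      and pos: "elen Y k > 0" "elen Y (Suc k) > 0"
      and edge_k: "edge Y k = elen Y k *\<^sub>R ?t" "edge Y (Suc k) = elen Y (Suc k) *\<^sub>R ?q"
      using nz edges ds_self_components[OF N] edge_scaleR_ds[OF N] by simp_all
    have turn: "?q - ?t = (\<kappa> 0 / 2) *\<^sub>R (elen Y k * snd ?t + elen Y (Suc k) * snd ?q,
        - (elen Y k * fst ?t + elen Y (Suc k) * fst ?q))"
      using equilibrium_node_equations(1)[OF eq N nz k]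
        equilibrium_curvature_const[OF eq edges, of k] k
      unfolding edge_k by simp
    have "fst ?q - fst ?t = \<kappa> 0 / 2 * (elen Y k * snd ?t + elen Y (Suc k) * snd ?q)"
      "snd ?q - snd ?t = - (\<kappa> 0 / 2 * (elen Y k * fst ?t + elen Y (Suc k) * fst ?q))"
      using arg_cong[OF turn, of fst] arg_cong[OF turn, of snd] by (simp_all add: algebra_simps)
    then show ?thesis
      by (rule unit_turn_weights_eq[OF unit _ _ pos]) (use \<open>\<kappa> 0 \<noteq> 0\<close> in simp)
  qed
  show ?thesis
    using \<open>j \<in> {1..N}\<close>
  proof (induction j)
    case (Suc j)
    then show ?case
      using step[of j] by (cases "j = 0") auto
  qed simp
qed

lemma equilibrium_curvature_nonzero:
  fixes Y :: "nat \<Rightarrow> pt"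
  assumes eq: "equilibrium N \<sigma> Y \<kappa>" and Y: "inXh N Y" and edges: "\<forall>j\<in>{1..N}. elen Y j > 0"
    and N: "N > 0" and \<sigma>: "\<bar>\<sigma>\<bar> < 1"
  shows "\<kappa> 0 \<noteq> 0"
proof
  assume "\<kappa> 0 = 0"
  let ?T = "ds N Y Y 1"
  have nz: "\<forall>j\<in>{1..N}. elen Y j \<noteq> 0"
    using edges by auto
  have straight: "ds N Y Y j = ?T" if "j \<in> {1..N}" for j
    using that
  proof (induction j)
    case (Suc j)
    then show ?case
      using equilibrium_node_equations(1)[OF eq N nz, of j]
        equilibrium_curvature_const[OF eq edges, of j] \<open>\<kappa> 0 = 0\<close> by (cases "j = 0") (auto simp: prod_eq_iff)
  qed simp
  have "0 = snd (Y N) - snd (Y 0)"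
    using Y by (simp add: inXh_def)
  also have "\<dots> = (\<Sum>j = 1..N. snd (edge Y j))"
    using sum_telescope''[of 0 N "\<lambda>j. snd (Y j)"] by (simp add: edge_def)
  also have "\<dots> = (\<Sum>j = 1..N. elen Y j) * snd ?T"
    unfolding sum_distrib_right
  proof (intro sum.cong refl)
    fix j assume "j \<in> {1..N}"
    then show "snd (edge Y j) = elen Y j * snd ?T"
      using edge_scaleR_ds[OF N, of Y j] straight[of j] nz by simp
  qed
  moreover have "(\<Sum>j = 1..N. elen Y j) > 0"
    using edges N by (intro sum_pos) auto
  ultimately have "snd ?T = 0"
    by simp
  moreover have "fst ?T = \<sigma>"
    using equilibrium_node_equations(2)[OF eq N nz] \<open>\<kappa> 0 = 0\<close> by simp
  ultimately have "\<sigma>\<^sup>2 = 1"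
    using ds_self_components[OF N, of Y 1] nz N by simp
  with \<sigma> show False
    by (simp add: abs_square_eq_1)
qed

lemma equilibrium_contact_angles:
  fixes Y :: "nat \<Rightarrow> pt"
  assumes eq: "equilibrium N \<sigma> Y \<kappa>" and edges: "\<forall>j\<in>{1..N}. elen Y j > 0" and N: "N > 0"
    and equal: "\<forall>j\<in>{1..N}. elen Y j = elen Y 1"
  shows "\<bar>cos (theta_l N Y) - \<sigma>\<bar> \<le> \<bar>\<kappa> 0\<bar> * curve_length N Y / 2 * meshh N"
    and "\<bar>cos (theta_r N Y) - \<sigma>\<bar> \<le> \<bar>\<kappa> 0\<bar> * curve_length N Y / 2 * meshh N"
proof -
  have nz: "\<forall>j\<in>{1..N}. elen Y j \<noteq> 0"
    using edges by auto
  have "curve_length N Y = (\<Sum>j = 1..N. elen Y 1)"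
    unfolding curve_length_def using equal by (intro sum.cong refl) blast
  then have bound: "\<bar>\<kappa> 0\<bar> / 2 * elen Y 1 = \<bar>\<kappa> 0\<bar> * curve_length N Y / 2 * meshh N"
    using N by (simp add: meshh_def)
  have snd_edge: "\<bar>\<kappa> 0\<bar> / 2 * \<bar>snd (edge Y j)\<bar> \<le> \<bar>\<kappa> 0\<bar> / 2 * elen Y j" for j
    using norm_snd_le[of "snd (edge Y j)" "fst (edge Y j)"] by (simp add: elen_def mult_left_mono)
  have N_in: "N \<in> {1..N}" and nz_1: "elen Y 1 \<noteq> 0" and nz_N: "elen Y N \<noteq> 0"
    using N nz by auto
  have "\<bar>cos (theta_l N Y) - \<sigma>\<bar> = \<bar>\<kappa> 0\<bar> / 2 * \<bar>snd (edge Y 1)\<bar>"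
    unfolding theta_l_def cos_arccos_fst_ds[OF N nz_1] equilibrium_node_equations(2)[OF eq N nz]
    by (simp add: abs_mult)
  also have "\<dots> \<le> \<bar>\<kappa> 0\<bar> / 2 * elen Y 1"
    by (rule snd_edge)
  also note bound
  finally show "\<bar>cos (theta_l N Y) - \<sigma>\<bar> \<le> \<bar>\<kappa> 0\<bar> * curve_length N Y / 2 * meshh N" .
  have "\<bar>cos (theta_r N Y) - \<sigma>\<bar> = \<bar>\<kappa> 0\<bar> / 2 * \<bar>snd (edge Y N)\<bar>"
    unfolding theta_r_def cos_arccos_fst_ds[OF N nz_N] equilibrium_node_equations(3)[OF eq N nz]
    using equilibrium_curvature_const[OF eq edges, of N] by (simp add: abs_mult)
  also have "\<dots> \<le> \<bar>\<kappa> 0\<bar> / 2 * elen Y N"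
    by (rule snd_edge)
  also have "\<dots> = \<bar>\<kappa> 0\<bar> / 2 * elen Y 1"
    using bspec[OF equal N_in] by simp
  also note bound
  finally show "\<bar>cos (theta_r N Y) - \<sigma>\<bar> \<le> \<bar>\<kappa> 0\<bar> * curve_length N Y / 2 * meshh N" .
qed

theorem proposition3p1:
  fixes N :: nat and \<tau> \<eta> \<sigma> \<theta>i :: real
    and X Xt :: "nat \<Rightarrow> nat \<Rightarrow> pt" and \<kappa> :: "nat \<Rightarrow> nat \<Rightarrow> real"
    and Xe :: "nat \<Rightarrow> pt" and \<kappa>e :: "nat \<Rightarrow> real"
  assumes N3: "N \<ge> 3"
    and tau: "\<tau> > 0" and eta: "\<eta> > 0"
    and sigma: "\<sigma> = cos \<theta>i" "0 < \<theta>i" "\<theta>i < pi"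
    and sol: "pc_zjb_solution N \<tau> \<eta> \<sigma> X \<kappa> Xt"
    and edges_pos: "\<forall>m. \<forall>j\<in>{1..N}. elen (X m) j > 0"
    and Xe_in: "inXh N Xe"
    and conv_X: "\<forall>k\<le>N. (\<lambda>m. X m k) \<longlonglongrightarrow> Xe k"
    and conv_kappa: "\<forall>k\<le>N. (\<lambda>m. \<kappa> m k) \<longlonglongrightarrow> \<kappa>e k"
    and conv_Xt: "\<forall>k\<le>N. (\<lambda>m. Xt m k) \<longlonglongrightarrow> Xe k"
    and edges_e_pos: "\<forall>i\<in>{1..N}. elen Xe i > 0"
  shows "(\<exists>\<kappa>c. \<kappa>c \<noteq> 0 \<and>
            (\<forall>j\<in>{1..N}. \<forall>\<rho>\<in>{node N (j - 1)..node N j}. interp N \<kappa>e j \<rho> = \<kappa>c))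
       \<and> (\<lambda>m. mesh_ratio N (X m)) \<longlonglongrightarrow> mesh_ratio N Xe
       \<and> mesh_ratio N Xe = 1
       \<and> (\<exists>C0>0. C0 \<le> \<bar>\<kappa>e 0\<bar> * curve_length N Xe
            \<and> \<bar>cos (theta_l N Xe) - \<sigma>\<bar> \<le> C0 * meshh N
            \<and> \<bar>cos (theta_r N Xe) - \<sigma>\<bar> \<le> C0 * meshh N)"
proof -
  have N: "N > 0"
    using N3 by simp
  have eq: "equilibrium N \<sigma> Xe \<kappa>e"
    by (rule pc_zjb_solution_limit_equilibrium[OF sol conv_X conv_kappa conv_Xt])
       (use edges_e_pos in force)
  have "\<bar>\<sigma>\<bar> < 1"
    using abs_cos_less_1 sigma by simp
  then have c: "\<kappa>e 0 \<noteq> 0"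
    by (rule equilibrium_curvature_nonzero[OF eq Xe_in edges_e_pos N])
  have equal: "\<forall>j\<in>{1..N}. elen Xe j = elen Xe 1"
    using equilibrium_edges_eq[OF eq edges_e_pos c] by blast
  have "interp N \<kappa>e j \<rho> = \<kappa>e 0" if "j \<in> {1..N}" for j \<rho>
    using equilibrium_curvature_const[OF eq edges_e_pos] that by (rule interp_const)
  then show ?thesis
    using c tendsto_mesh_ratio[OF N conv_X edges_e_pos] mesh_ratio_eq_1[OF N _ equal]
      equilibrium_contact_angles[OF eq edges_e_pos N equal] curve_length_pos[OF N edges_e_pos]
      edges_e_pos N
    by (intro conjI exI[of _ "\<kappa>e 0"] exI[of _ "\<bar>\<kappa>e 0\<bar> * curve_length N Xe / 2"]) auto
qed

end
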